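(* Let $p\ge q\ge d+1$ be positive integers. Let $\mathcal F$ be an infinite family of closed convex sets in $\mathbb R^d$ satisfying the $(d+1,d+1)$-property, and let $\mathcal B$ be a $(q-d)$-free family of $p-d$ convex sets in $\mathbb R^d$. If $\mathcal F\cup\mathcal B$ satisfies the $(p,q)$-property, then $\pi(\mathcal F)=1$, i.e., all members of $\mathcal F$ have a common point.
   Context: A family of at least $p$ sets satisfies the $(p,q)$-property if among any $p$ of its members there are $q$ with a common point. A family of convex sets in $\mathbb R^d$ is $m$-free if all its members are compact and no $m+1$ of its members have a common point. $\pi(\mathcal F)$ denotes the minimum number of points needed to meet every member of $\mathcal F$. *)

theory Defs
  imports "HOL-Analysis.Analysis"
begin

definition pq_property :: "nat \<Rightarrow> nat \<Rightarrow> 'a set set \<Rightarrow> bool" where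
  "pq_property p q F \<longleftrightarrow>
     (infinite F \<or> p \<le> card F) \<and>
     (\<forall>S\<subseteq>F. card S = p \<longrightarrow> (\<exists>T\<subseteq>S. card T = q \<and> \<Inter>T \<noteq> {}))"

definition m_free :: "nat \<Rightarrow> 'a::topological_space set set \<Rightarrow> bool" where
  "m_free m F \<longleftrightarrow>
     (\<forall>A\<in>F. compact A) \<and> (\<forall>S\<subseteq>F. card S = m + 1 \<longrightarrow> \<Inter>S = {})"

end

theory Submission
  imports Defs
begin

(*
  Let K be the convex hull of the union of the members of B; it is
  compact and convex because B is a finite family of compact convex sets.
  (1) Combinatorial step: every d members of F have a common point lying in some
      member of B.  If the d members include a member of B this follows from the
      (d+1,d+1)-property of F.  Otherwise add all p-d members of B: the (p,q)-property
      gives q of these p sets with a common point, at most q-d of them from B by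
      (q-d)-freeness, hence all d members of the chosen d-subfamily and at least one
      member of B.
  (2) Geometric step: if a compact convex K meets every intersection of d members of
      an infinite family F of closed convex sets in R^d whose (d+1)-subfamilies all
      intersect, then Helly's theorem applied to F' \<union> {K} (F' finite) shows that the
      closed sets of F restricted to K have the finite intersection property, so
      K \<inter> \<Inter>F \<noteq> {} by compactness.
*)

lemma pq_property_same_imp_intersect:
  assumes "pq_property k k F" and "0 < k" and "S \<subseteq> F" and "card S = k"
  shows "\<Inter>S \<noteq> {}"
proof -
  from assms(1,3,4) obtain T where T: "T \<subseteq> S" "card T = k" "\<Inter>T \<noteq> {}"
    unfolding pq_property_def by blast
  have "finite S" using assms(2,4) by (intro card_ge_0_finite) auto
  then have "T = S" using T assms(4) by (metis card_subset_eq)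
  then show ?thesis using T(3) by simp
qed

lemma m_free_intersecting_card_le:
  assumes "m_free m B" and "T \<subseteq> B" and "\<Inter>T \<noteq> {}"
  shows "card T \<le> m"
proof (rule ccontr)
  assume "\<not> card T \<le> m"
  then obtain U where U: "U \<subseteq> T" "card U = m + 1"
    by (metis not_less_eq_eq obtain_subset_with_card_n Suc_eq_plus1)
  then have "\<Inter>U = {}" using assms(1,2) unfolding m_free_def by blast
  moreover have "\<Inter>T \<subseteq> \<Inter>U" using U(1) by blast
  ultimately show False using assms(3) by blast
qed

lemma choice_from_disjoint_union:
  assumes "finite D" "finite B" "D \<inter> B = {}" "card D = d" "d < q"
    and "T \<subseteq> D \<union> B" "card T = q" "card (T \<inter> B) \<le> q - d"
  shows "D \<subseteq> T" and "T \<inter> B \<noteq> {}"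
proof -
  have "finite T" using assms(1,2,6) finite_subset by blast
  moreover have "T = (T \<inter> D) \<union> (T \<inter> B)" using assms(6) by blast
  ultimately have split: "card T = card (T \<inter> D) + card (T \<inter> B)"
    using assms(3) by (metis card_Un_disjoint finite_Int inf_assoc inf_bot_right inf_left_commute)
  have "card (T \<inter> D) \<le> d" using assms(1,4) by (metis card_mono inf_le2)
  then have TD: "card (T \<inter> D) = d" using split assms(5,7,8) by linarith
  then have "T \<inter> D = D" using assms(1,4) by (metis card_subset_eq inf_le2)
  then show "D \<subseteq> T" by blast
  have "card (T \<inter> B) \<noteq> 0" using split TD assms(5,7) by linarith
  then show "T \<inter> B \<noteq> {}" by (metis card.empty)
qed

lemma d_subfamily_meets_member:
  fixes F B :: "'a::topological_space set set"
  assumes "d < q" and "q \<le> p" and "infinite F"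
    and "pq_property (d + 1) (d + 1) F"
    and "finite B" and "card B = p - d" and "m_free (q - d) B"
    and "pq_property p q (F \<union> B)"
    and "D \<subseteq> F" and "finite D" and "card D = d"
  shows "\<exists>b\<in>B. \<Inter>D \<inter> b \<noteq> {}"
proof (cases "D \<inter> B = {}")
  case False
  then obtain b where b: "b \<in> D" "b \<in> B" by blast
  have "\<not> F \<subseteq> D" using assms(3,10) finite_subset by blast
  then obtain A where A: "A \<in> F" "A \<notin> D" by blast
  have "insert A D \<subseteq> F" "card (insert A D) = d + 1"
    using A assms(9,10,11) by auto
  then have "\<Inter>(insert A D) \<noteq> {}"
    using assms(4) by (intro pq_property_same_imp_intersect) auto
  then have "\<Inter>D \<inter> b \<noteq> {}" using b(1) by auto
  then show ?thesis using b(2) by blast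
next
  case True
  have "card (D \<union> B) = p"
    using True assms(1,2,5,6,10,11) by (simp add: card_Un_disjoint)
  moreover have "D \<union> B \<subseteq> F \<union> B" using assms(9) by blast
  ultimately obtain T where T: "T \<subseteq> D \<union> B" "card T = q" "\<Inter>T \<noteq> {}"
    using assms(8) unfolding pq_property_def by blast
  have "card (T \<inter> B) \<le> q - d"
    using m_free_intersecting_card_le[OF assms(7)] T(3) by blast
  then have "D \<subseteq> T" "T \<inter> B \<noteq> {}"
    using choice_from_disjoint_union[OF assms(10,5) True assms(11,1) T(1,2)] by blast+
  then obtain b where "b \<in> B" "\<Inter>T \<subseteq> \<Inter>D \<inter> b" by auto
  then show ?thesis using T(3) by blast
qed

lemma helly_with_extra_set:
  fixes F :: "'a::euclidean_space set set"
  assumes "\<forall>A\<in>F. convex A" and "convex K"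
    and "\<And>S. S \<subseteq> F \<Longrightarrow> card S = DIM('a) + 1 \<Longrightarrow> \<Inter>S \<noteq> {}"
    and "\<And>D. D \<subseteq> F \<Longrightarrow> finite D \<Longrightarrow> card D = DIM('a) \<Longrightarrow> \<Inter>D \<inter> K \<noteq> {}"
    and "G \<subseteq> F" and "finite G" and "DIM('a) + 1 \<le> card G"
  shows "\<Inter>(insert K G) \<noteq> {}"
proof (rule Helly)
  show "DIM('a) + 1 \<le> card (insert K G)"
    using assms(6,7) by (meson card_insert_le le_trans)
  show "\<forall>s\<in>insert K G. convex s" using assms(1,2,5) by auto
next
  fix t assume t: "t \<subseteq> insert K G" "card t = DIM('a) + 1"
  show "\<Inter>t \<noteq> {}"
  proof (cases "K \<in> t")
    case False
    then show ?thesis using t assms(3,5) by blast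
  next
    case True
    have "finite t" using t(2) by (intro card_ge_0_finite) auto
    then have "\<Inter>(t - {K}) \<inter> K \<noteq> {}"
      using True t assms(5) by (intro assms(4)) auto
    moreover have "\<Inter>t = \<Inter>(t - {K}) \<inter> K" using True by blast
    ultimately show ?thesis by simp
  qed
qed

lemma compact_meets_intersection_of_helly_family:
  fixes F :: "'a::euclidean_space set set"
  assumes "infinite F" and "\<forall>A\<in>F. closed A \<and> convex A"
    and "compact K" and "convex K"
    and "\<And>S. S \<subseteq> F \<Longrightarrow> card S = DIM('a) + 1 \<Longrightarrow> \<Inter>S \<noteq> {}"
    and "\<And>D. D \<subseteq> F \<Longrightarrow> finite D \<Longrightarrow> card D = DIM('a) \<Longrightarrow> \<Inter>D \<inter> K \<noteq> {}"
  shows "K \<inter> \<Inter>F \<noteq> {}"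
proof (rule compact_imp_fip[OF assms(3)])
  show "\<And>T. T \<in> F \<Longrightarrow> closed T" using assms(2) by auto
next
  fix G assume G: "finite G" "G \<subseteq> F"
  obtain X where X: "finite X" "card X = DIM('a) + 1" "X \<subseteq> F"
    using infinite_arbitrarily_large[OF assms(1)] by blast
  have "card X \<le> card (G \<union> X)" using G(1) X(1) by (simp add: card_mono)
  then have "\<Inter>(insert K (G \<union> X)) \<noteq> {}"
    using assms(2,4,5,6) G X
    by (intro helly_with_extra_set[where F = F]) auto
  then show "K \<inter> \<Inter>G \<noteq> {}" by blast
qed

theorem lemma3p2:
  fixes F B :: "'a::euclidean_space set set" and p q :: nat
  defines "d \<equiv> DIM('a)"
  assumes "q \<ge> d + 1" and "p \<ge> q"
    and "infinite F" and "\<forall>A\<in>F. closed A \<and> convex A"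
    and "pq_property (d + 1) (d + 1) F"
    and "finite B" and "card B = p - d" and "\<forall>A\<in>B. convex A"
    and "m_free (q - d) B"
    and "pq_property p q (F \<union> B)"
  shows "\<Inter>F \<noteq> {}"
proof -
  define K where "K = convex hull (\<Union>B)"
  have "compact K" unfolding K_def
    using assms(7,10) unfolding m_free_def by (intro compact_convex_hull compact_Union) auto
  moreover have "convex K" unfolding K_def by simp
  moreover have "\<And>S. S \<subseteq> F \<Longrightarrow> card S = d + 1 \<Longrightarrow> \<Inter>S \<noteq> {}"
    using assms(6) by (intro pq_property_same_imp_intersect) auto
  moreover have "\<Inter>D \<inter> K \<noteq> {}" if D: "D \<subseteq> F" "finite D" "card D = d" for D
  proof -
    obtain b where "b \<in> B" "\<Inter>D \<inter> b \<noteq> {}"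
      using d_subfamily_meets_member[OF _ assms(3,4,6,7,8,10,11) D] assms(2) by auto
    moreover have "b \<subseteq> K" if "b \<in> B" for b
      unfolding K_def using that by (meson Union_upper hull_subset subset_trans)
    ultimately show ?thesis by blast
  qed
  ultimately have "K \<inter> \<Inter>F \<noteq> {}"
    using compact_meets_intersection_of_helly_family[OF assms(4,5)] unfolding d_def by blast
  then show ?thesis by blast
qed

end
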